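(* Let $A\in\mathbb{C}^{r\times n}$, $\vec v\in\mathbb{C}^r$, $0<\nu\le1$, $\mu>0$, $\gamma>0$, and let \[ \mathcal D=\{\vec x\in\mathbb{C}^n:\ |\|\vec x\|_2-\nu|\le\gamma,\ \|A\vec x-\vec v\|_2\le\gamma,\ \|\vec x\|_\infty\le\mu+\gamma\}. \] If $\mathcal D$ is nonempty, then there is $\vec x\in\mathcal D$ that can be written as $\vec x=\vec u+\vec s$, where $\vec u$ lies in the span of the complex conjugates of the rows of $A$ (i.e. the range of $A^\dagger$) and $\vec s$ has at most $1/\mu^2+1$ nonzero entries.
   Context: $A^\dagger$ is the conjugate transpose of $A$; $\|\cdot\|_\infty$ is the maximum absolute value of entries. *)

theory Defs
  imports "HOL-Analysis.Analysis"
begin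

definition conj_transpose :: "complex ^ 'n ^ 'r \<Rightarrow> complex ^ 'r ^ 'n" where
  "conj_transpose A = (\<chi> i j. cnj (A $ j $ i))"

definition linf_norm :: "complex ^ 'n \<Rightarrow> real" where
  "linf_norm x = Max (range (\<lambda>i. cmod (x $ i)))"

definition Dset :: "complex ^ 'n ^ 'r \<Rightarrow> complex ^ 'r \<Rightarrow> real \<Rightarrow> real \<Rightarrow> real \<Rightarrow> (complex ^ 'n) set" where
  "Dset A v \<nu> \<mu> \<gamma> = {x. \<bar>norm x - \<nu>\<bar> \<le> \<gamma> \<and> norm (A *v x - v) \<le> \<gamma> \<and> linf_norm x \<le> \<mu> + \<gamma>}"

end

theory Submission
  imports Defs
begin

text \<open>
  Fix a point \<open>x\<^sub>0\<close> of D and work in the fibre K of all y with \<open>A y = A x\<^sub>0\<close> and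
  \<open>|y\<^sub>i| \<le> \<mu> + \<gamma>\<close>. Among the points of K of norm at most \<open>\<nu> + \<gamma>\<close> pick one, y, with
  the largest set S of saturated coordinates (\<open>|y\<^sub>i| = \<mu> + \<gamma>\<close>); comparing norms gives
  \<open>|S| (\<mu> + \<gamma>)\<^sup>2 \<le> (\<nu> + \<gamma>)\<^sup>2\<close>, hence \<open>|S| \<le> 1/\<mu>\<^sup>2\<close>. Minimise the norm over the
  points of K that agree with y on S. By maximality of S the minimiser saturates no further
  coordinate, so it is a local minimiser along V = {z. A z = 0, z vanishes on S} and therefore
  orthogonal to V; but the orthogonal complement of V is the range of \<open>A\<^sup>\<dagger>\<close> plus the vectors
  supported on S. If the minimiser is too short, move it orthogonally along a unit vector of V
  that lies in this complement after adding one coordinate j: its norm grows to exactly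
  \<open>\<nu> - \<gamma>\<close>, and a connectedness argument shows that no coordinate outside S saturates on the way.
\<close>

lemma inner_complex_eq_Re_mult_cnj: "inner (a::complex) b = Re (a * cnj b)"
  by (simp add: inner_complex_def)

lemma inner_conj_transpose_mult:
  fixes A :: "complex ^ 'n ^ 'r"
  shows "inner q (conj_transpose A *v l) = inner (A *v q) l"
proof -
  have swap: "(\<Sum>k\<in>UNIV. \<Sum>j\<in>UNIV. q$k * A$j$k * cnj (l$j)) = (\<Sum>j\<in>UNIV. (A *v q)$j * cnj (l$j))"
    by (subst sum.swap) (simp add: matrix_vector_mult_def sum_distrib_left sum_distrib_right mult_ac)
  have "inner q (conj_transpose A *v l) = Re (\<Sum>k\<in>UNIV. \<Sum>j\<in>UNIV. q$k * A$j$k * cnj (l$j))"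
    unfolding inner_vec_def inner_complex_eq_Re_mult_cnj matrix_vector_mult_def conj_transpose_def
    by (simp add: Re_sum sum_distrib_left mult_ac)
  also have "\<dots> = Re (\<Sum>j\<in>UNIV. (A *v q)$j * cnj (l$j))"
    by (simp only: swap)
  also have "\<dots> = inner (A *v q) l"
    by (simp only: inner_vec_def inner_complex_eq_Re_mult_cnj Re_sum)
  finally show ?thesis .
qed

definition adj_range_plus_supp :: "complex ^ 'n ^ 'r \<Rightarrow> 'n set \<Rightarrow> (complex ^ 'n) set" where
  "adj_range_plus_supp A T = {conj_transpose A *v l + s | l s. \<forall>i. i \<notin> T \<longrightarrow> s$i = 0}"

definition kernel_vanishing_on :: "complex ^ 'n ^ 'r \<Rightarrow> 'n set \<Rightarrow> (complex ^ 'n) set" where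
  "kernel_vanishing_on A T = {z. A *v z = 0 \<and> (\<forall>i\<in>T. z$i = 0)}"

lemma subspace_adj_range_plus_supp: "subspace (adj_range_plus_supp A T)"
proof (unfold subspace_def, intro conjI ballI allI)
  show "0 \<in> adj_range_plus_supp A T"
    unfolding adj_range_plus_supp_def by (auto intro!: exI[of _ 0])
next
  fix x y assume "x \<in> adj_range_plus_supp A T" "y \<in> adj_range_plus_supp A T"
  then obtain l s l' s' where "x = conj_transpose A *v l + s" "\<forall>i. i \<notin> T \<longrightarrow> s$i = 0"
    "y = conj_transpose A *v l' + s'" "\<forall>i. i \<notin> T \<longrightarrow> s'$i = 0"
    unfolding adj_range_plus_supp_def by blast
  then show "x + y \<in> adj_range_plus_supp A T"
    unfolding adj_range_plus_supp_def
    by (intro CollectI exI[of _ "l + l'"] exI[of _ "s + s'"])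
       (simp add: matrix_vector_right_distrib algebra_simps)
next
  fix c :: real and x assume "x \<in> adj_range_plus_supp A T"
  then obtain l s where "x = conj_transpose A *v l + s" "\<forall>i. i \<notin> T \<longrightarrow> s$i = 0"
    unfolding adj_range_plus_supp_def by blast
  then show "c *\<^sub>R x \<in> adj_range_plus_supp A T"
    unfolding adj_range_plus_supp_def
    by (intro CollectI exI[of _ "c *\<^sub>R l"] exI[of _ "c *\<^sub>R s"])
       (simp add: linear_cmul[OF matrix_vector_mul_linear] scaleR_add_right)
qed

lemma adj_range_plus_supp_mono: "T \<subseteq> T' \<Longrightarrow> adj_range_plus_supp A T \<subseteq> adj_range_plus_supp A T'"
  unfolding adj_range_plus_supp_def by blast

lemma axis_mem_adj_range_plus_supp: "i \<in> T \<Longrightarrow> axis i a \<in> adj_range_plus_supp A T"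
  unfolding adj_range_plus_supp_def by (intro CollectI exI[of _ 0] exI[of _ "axis i a"]) (auto simp: axis_def)

lemma kernel_vanishing_on_eq_orthogonal_comp:
  fixes A :: "complex ^ 'n ^ 'r"
  shows "kernel_vanishing_on A T = (adj_range_plus_supp A T)\<^sup>\<bottom>"
proof (intro equalityI subsetI)
  fix z assume "z \<in> kernel_vanishing_on A T"
  then have Az: "A *v z = 0" and zT: "\<forall>i\<in>T. z$i = 0"
    unfolding kernel_vanishing_on_def by auto
  have "inner (conj_transpose A *v l + s) z = 0" if "\<forall>i. i \<notin> T \<longrightarrow> s$i = 0" for l s
  proof -
    have "inner s z = 0" unfolding inner_vec_def
      by (rule sum.neutral) (metis that zT inner_zero_left inner_zero_right)
    then show ?thesis
      using inner_conj_transpose_mult[of z A l] Az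
      by (simp add: inner_add_left inner_add_right inner_commute)
  qed
  then show "z \<in> (adj_range_plus_supp A T)\<^sup>\<bottom>"
    unfolding orthogonal_comp_def orthogonal_def adj_range_plus_supp_def by blast
next
  fix q assume "q \<in> (adj_range_plus_supp A T)\<^sup>\<bottom>"
  then have orth: "inner w q = 0" if "w \<in> adj_range_plus_supp A T" for w
    using that unfolding orthogonal_comp_def orthogonal_def by blast
  have "conj_transpose A *v (A *v q) \<in> adj_range_plus_supp A T"
    unfolding adj_range_plus_supp_def by (intro CollectI exI[of _ "A *v q"] exI[of _ 0]) simp
  then have "inner (A *v q) (A *v q) = 0"
    using orth inner_conj_transpose_mult[of q A "A *v q"] by (metis inner_commute)
  moreover have "q$i = 0" if "i \<in> T" for i
  proof -
    have "inner (axis i 1) q = 0" "inner (axis i \<i>) q = 0"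
      using orth axis_mem_adj_range_plus_supp[OF that] by blast+
    then show ?thesis by (simp add: inner_axis' inner_complex_def complex_eq_iff)
  qed
  ultimately show "q \<in> kernel_vanishing_on A T"
    unfolding kernel_vanishing_on_def by auto
qed

lemma adj_range_plus_supp_eq_orthogonal_comp:
  fixes A :: "complex ^ 'n ^ 'r"
  shows "adj_range_plus_supp A T = (kernel_vanishing_on A T)\<^sup>\<bottom>"
  by (simp add: kernel_vanishing_on_eq_orthogonal_comp orthogonal_comp_self subspace_adj_range_plus_supp)

lemma subspace_kernel_vanishing_on: "subspace (kernel_vanishing_on A T)"
  by (simp add: kernel_vanishing_on_eq_orthogonal_comp subspace_orthogonal_comp)

definition polydisc_fiber :: "complex ^ 'n ^ 'r \<Rightarrow> complex ^ 'r \<Rightarrow> real \<Rightarrow> (complex ^ 'n) set" where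
  "polydisc_fiber A b c = {y. A *v y = b \<and> (\<forall>i. cmod (y$i) \<le> c)}"

definition saturated :: "real \<Rightarrow> complex ^ 'n \<Rightarrow> 'n set" where
  "saturated c y = {i. cmod (y$i) = c}"

lemma compact_polydisc_fiber:
  fixes A :: "complex ^ 'n ^ 'r"
  shows "compact (polydisc_fiber A b c)"
proof -
  have "polydisc_fiber A b c = {y. A *v y = b} \<inter> (\<Inter>i. {y. cmod (y$i) \<le> c})"
    unfolding polydisc_fiber_def by auto
  moreover have "closed {y. A *v y = b}"
    by (intro closed_Collect_eq continuous_intros linear_continuous_on) auto
  moreover have "closed {y::complex^'n. cmod (y$i) \<le> c}" for i
    by (intro closed_Collect_le continuous_intros)
  ultimately have "closed (polydisc_fiber A b c)"
    by (metis closed_Int closed_INT)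
  moreover have "norm y \<le> norm ((\<chi> i. complex_of_real \<bar>c\<bar>) :: complex ^ 'n)"
    if "y \<in> polydisc_fiber A b c" for y
    by (intro norm_le_componentwise_cart)
      (use that in \<open>auto simp: polydisc_fiber_def intro: order_trans[OF _ abs_ge_self]\<close>)
  then have "bounded (polydisc_fiber A b c)" unfolding bounded_iff by blast
  ultimately show ?thesis by (simp add: compact_eq_bounded_closed)
qed

lemma open_Collect_nth_norm_less: "open {x :: 'a::real_normed_vector ^ 'n. \<forall>i\<in>I. norm (x$i) < c}"
proof -
  have "open {x :: 'a ^ 'n. norm (x$i) < c}" for i
    by (intro open_Collect_less continuous_intros)
  then have "open (\<Inter>i\<in>I. {x :: 'a ^ 'n. norm (x$i) < c})"
    by (intro open_INT) auto
  moreover have "(\<Inter>i\<in>I. {x :: 'a ^ 'n. norm (x$i) < c}) = {x. \<forall>i\<in>I. norm (x$i) < c}"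
    by auto
  ultimately show ?thesis by simp
qed

lemma card_saturated_mult_square_le: "real (card (saturated c y)) * c\<^sup>2 \<le> (norm y)\<^sup>2"
proof -
  have "real (card (saturated c y)) * c\<^sup>2 = (\<Sum>i\<in>saturated c y. (cmod (y$i))\<^sup>2)"
    unfolding saturated_def by simp
  also have "\<dots> \<le> (\<Sum>i\<in>UNIV. (cmod (y$i))\<^sup>2)" by (rule sum_mono2) auto
  also have "\<dots> = (norm y)\<^sup>2" by (simp add: norm_vec_def L2_set_def sum_nonneg)
  finally show ?thesis .
qed

lemma exists_max_card_saturated:
  fixes x0 :: "complex ^ 'n"
  assumes "x0 \<in> Q"
  obtains y where "y \<in> Q" and "\<And>y'. y' \<in> Q \<Longrightarrow> card (saturated c y') \<le> card (saturated c y)"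
proof -
  have "card (saturated c y) < Suc CARD('n)" for y :: "complex ^ 'n"
    by (simp add: card_mono le_imp_less_Suc)
  then show ?thesis
    using ex_has_greatest_nat[of "\<lambda>y. y \<in> Q" x0 "\<lambda>y. card (saturated c y)"] assms that by blast
qed

lemma norm_nth_lt_of_saturated_max:
  assumes "y' \<in> polydisc_fiber A b c" and "\<forall>i\<in>saturated c y. y'$i = y$i"
    and "card (saturated c y') \<le> card (saturated c y)" and "i \<notin> saturated c y"
  shows "cmod (y'$i) < c"
proof -
  have sub: "saturated c y \<subseteq> saturated c y'" using assms(2) unfolding saturated_def by auto
  moreover have "card (saturated c y) \<le> card (saturated c y')"
    using sub by (intro card_mono) auto
  ultimately have "saturated c y' = saturated c y"
    using assms(3) by (metis card_subset_eq finite le_antisym)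
  then have "cmod (y'$i) \<noteq> c" using assms(4) unfolding saturated_def by auto
  moreover have "cmod (y'$i) \<le> c" using assms(1) unfolding polydisc_fiber_def by auto
  ultimately show ?thesis by simp
qed

lemma inner_eq_0_of_local_min_norm:
  fixes x z :: "'a::real_inner"
  assumes "0 < d" and "\<And>t. \<bar>t\<bar> < d \<Longrightarrow> norm x \<le> norm (x + t *\<^sub>R z)"
  shows "inner x z = 0"
proof -
  have sq: "(norm (x + t *\<^sub>R z))\<^sup>2 = (norm x)\<^sup>2 + 2 * t * inner x z + t\<^sup>2 * (norm z)\<^sup>2" for t
    unfolding power2_norm_eq_inner
    by (simp add: inner_add_left inner_add_right inner_commute power2_eq_square algebra_simps)
  define f where "f t = (norm (x + t *\<^sub>R z))\<^sup>2" for t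
  have "DERIV f 0 :> 2 * inner x z"
    unfolding f_def sq by (auto intro!: derivative_eq_intros)
  moreover have "\<forall>t. \<bar>0 - t\<bar> < d \<longrightarrow> f 0 \<le> f t"
    using assms(2) by (simp add: f_def power_mono)
  ultimately have "2 * inner x z = 0"
    by (rule DERIV_local_min[OF _ assms(1)])
  then show ?thesis by simp
qed

lemma min_norm_mem_adj_range_plus_supp:
  assumes ym: "ym \<in> polydisc_fiber A b c" and strict: "\<forall>i\<in>-S. cmod (ym$i) < c"
    and min: "\<And>y'. y' \<in> polydisc_fiber A b c \<Longrightarrow> y' - ym \<in> kernel_vanishing_on A S
                \<Longrightarrow> norm ym \<le> norm y'"
  shows "ym \<in> adj_range_plus_supp A S"
proof -
  have "ym \<in> {x. \<forall>i\<in>-S. cmod (x$i) < c}" using strict by simp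
  then obtain e where "0 < e" and e: "ball ym e \<subseteq> {x. \<forall>i\<in>-S. cmod (x$i) < c}"
    using open_contains_ball[THEN iffD1, OF open_Collect_nth_norm_less] by blast
  have "inner ym z = 0" if z: "z \<in> kernel_vanishing_on A S" for z
  proof (rule inner_eq_0_of_local_min_norm)
    have z1: "0 < norm z + 1" by (simp add: add_nonneg_pos)
    then show "0 < e / (norm z + 1)" using \<open>0 < e\<close> by simp
    fix t assume "\<bar>t\<bar> < e / (norm z + 1)"
    then have "\<bar>t\<bar> * (norm z + 1) < e" using z1 by (simp add: pos_less_divide_eq)
    then have "\<bar>t\<bar> * norm z < e" by (simp add: algebra_simps)
    then have "ym + t *\<^sub>R z \<in> ball ym e" by (simp add: dist_norm)
    then have strict': "\<forall>i\<in>-S. cmod ((ym + t *\<^sub>R z)$i) < c" using e by blast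
    have "cmod ((ym + t *\<^sub>R z)$i) \<le> c" for i
    proof (cases "i \<in> S")
      case True
      then show ?thesis using ym z unfolding polydisc_fiber_def kernel_vanishing_on_def by simp
    next
      case False
      then show ?thesis using strict' by (simp add: less_imp_le)
    qed
    moreover have "A *v (ym + t *\<^sub>R z) = b"
      using ym z unfolding polydisc_fiber_def kernel_vanishing_on_def
      by (simp add: matrix_vector_right_distrib linear_cmul[OF matrix_vector_mul_linear])
    ultimately have "ym + t *\<^sub>R z \<in> polydisc_fiber A b c"
      unfolding polydisc_fiber_def by blast
    moreover have "(ym + t *\<^sub>R z) - ym \<in> kernel_vanishing_on A S"
      using subspace_mul[OF subspace_kernel_vanishing_on z] by simp
    ultimately show "norm ym \<le> norm (ym + t *\<^sub>R z)" by (rule min)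
  qed
  then show ?thesis
    unfolding adj_range_plus_supp_eq_orthogonal_comp orthogonal_comp_def orthogonal_def
    by (simp add: inner_commute)
qed

lemma exists_min_norm_in_polydisc_fiber_coset:
  fixes A :: "complex ^ 'n ^ 'r"
  assumes y: "y \<in> polydisc_fiber A b c" and V: "subspace V"
  obtains ym where "ym \<in> polydisc_fiber A b c" and "ym - y \<in> V"
    and "\<And>y'. y' \<in> polydisc_fiber A b c \<Longrightarrow> y' - ym \<in> V \<Longrightarrow> norm ym \<le> norm y'"
proof -
  let ?C = "polydisc_fiber A b c \<inter> (\<lambda>y'. y' - y) -` V"
  have "compact ?C"
    by (intro compact_Int_closed compact_polydisc_fiber continuous_closed_vimage
        closed_subspace V continuous_intros)
  moreover have "y \<in> ?C" using y subspace_0[OF V] by simp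
  ultimately obtain ym where ym: "ym \<in> ?C" and min: "\<forall>y'\<in>?C. norm ym \<le> norm y'"
    using continuous_attains_inf[of ?C norm] continuous_on_norm_id by blast
  have "norm ym \<le> norm y'" if "y' \<in> polydisc_fiber A b c" "y' - ym \<in> V" for y'
  proof -
    have "y' - y = (y' - ym) + (ym - y)" by simp
    then have "y' - y \<in> V" using subspace_add[OF V] that(2) ym by (metis IntD2 vimage_eq)
    then show ?thesis using min that(1) by blast
  qed
  then show ?thesis using that ym by blast
qed

lemma exists_unit_vec_kernel_vanishing_on:
  fixes A :: "complex ^ 'n ^ 'r"
  assumes "kernel_vanishing_on A S \<noteq> {0}"
  obtains j w where "w \<in> kernel_vanishing_on A S" and "norm w = 1"
    and "w \<in> adj_range_plus_supp A (insert j S)"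
proof -
  let ?V = "kernel_vanishing_on A S"
  obtain z where zV: "z \<in> ?V" and "z \<noteq> 0"
    using assms subspace_0[OF subspace_kernel_vanishing_on] by blast
  then obtain j where j: "z$j \<noteq> 0" by (metis vec_eq_iff zero_index)
  define e where "e = axis j (z$j)"
  obtain p q where p: "p \<in> span ?V" and q: "\<And>w. w \<in> span ?V \<Longrightarrow> orthogonal q w"
    and epq: "e = p + q"
    using orthogonal_subspace_decomp_exists by metis
  have pV: "p \<in> ?V" using p span_eq_iff subspace_kernel_vanishing_on by blast
  have "q \<in> adj_range_plus_supp A S"
    using q span_base
    by (auto simp: adj_range_plus_supp_eq_orthogonal_comp orthogonal_comp_def orthogonal_commute)
  then have "e - q \<in> adj_range_plus_supp A (insert j S)"
    using subspace_diff[OF subspace_adj_range_plus_supp] adj_range_plus_supp_mono[of S "insert j S" A]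
      axis_mem_adj_range_plus_supp[of j "insert j S"] e_def by blast
  then have pR: "p \<in> adj_range_plus_supp A (insert j S)" using epq by simp
  have "p \<noteq> 0" \<comment> \<open>p is the projection of \<open>e\<close> onto V, and \<open>e\<close> is not orthogonal to \<open>z \<in> V\<close>\<close>
  proof
    assume "p = 0"
    then have "inner e z = 0" using q[OF span_base[OF zV]] epq by (simp add: orthogonal_def)
    moreover have "inner e z = inner (z$j) (z$j)" unfolding e_def by (simp add: inner_axis')
    ultimately show False using j by simp
  qed
  show ?thesis
  proof
    show "sgn p \<in> ?V"
      unfolding sgn_div_norm by (rule subspace_mul[OF subspace_kernel_vanishing_on pV])
    show "norm (sgn p) = 1" using \<open>p \<noteq> 0\<close> by (simp add: norm_sgn)
    show "sgn p \<in> adj_range_plus_supp A (insert j S)"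
      unfolding sgn_div_norm by (rule subspace_mul[OF subspace_adj_range_plus_supp pR])
  qed
qed

lemma connected_clopen_preimage_mem:
  assumes "connected U" and "continuous_on U P" and "closed F" and "open G"
    and "\<And>t. t \<in> U \<Longrightarrow> P t \<in> F \<longleftrightarrow> P t \<in> G"
    and "a \<in> U" and "P a \<in> F" and "t \<in> U"
  shows "P t \<in> F"
proof -
  have "U \<inter> P -` F = U \<inter> P -` G" using assms(5) by blast
  then have "closedin (top_of_set U) (U \<inter> P -` F)" and "openin (top_of_set U) (U \<inter> P -` F)"
    using continuous_closedin_preimage[OF assms(2,3)] continuous_openin_preimage_gen[OF assms(2,4)]
    by simp_all
  then have "U \<inter> P -` F = {} \<or> U \<inter> P -` F = U"
    using assms(1) connected_clopen by blast
  then show ?thesis using assms(6-8) by blast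
qed

lemma exists_norm_eq_in_polydisc_fiber:
  fixes A :: "complex ^ 'n ^ 'r"
  assumes ym: "ym \<in> polydisc_fiber A b c" and ymR: "ym \<in> adj_range_plus_supp A S"
    and "norm ym < r" and "kernel_vanishing_on A S \<noteq> {0}"
    and strict: "\<And>y. y \<in> polydisc_fiber A b c \<Longrightarrow> norm y \<le> r \<Longrightarrow> \<forall>i\<in>S. y$i = ym$i
                   \<Longrightarrow> \<forall>i\<in>-S. cmod (y$i) < c"
  obtains x j where "x \<in> polydisc_fiber A b c" and "norm x = r"
    and "x \<in> adj_range_plus_supp A (insert j S)"
proof -
  obtain j w where wV: "w \<in> kernel_vanishing_on A S" and "norm w = 1"
    and wR: "w \<in> adj_range_plus_supp A (insert j S)"
    using exists_unit_vec_kernel_vanishing_on assms(4) by blast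
  have "ym \<in> (kernel_vanishing_on A S)\<^sup>\<bottom>"
    using ymR by (simp add: adj_range_plus_supp_eq_orthogonal_comp)
  then have orth: "orthogonal ym (s *\<^sub>R w)" for s
    using subspace_mul[OF subspace_kernel_vanishing_on wV] orthogonal_commute
    unfolding orthogonal_comp_def by blast
  define \<rho> where "\<rho> = sqrt (r\<^sup>2 - (norm ym)\<^sup>2)"
  have "(norm ym)\<^sup>2 \<le> r\<^sup>2" using \<open>norm ym < r\<close> by (intro power_mono) auto
  then have \<rho>2: "\<rho>\<^sup>2 = r\<^sup>2 - (norm ym)\<^sup>2" unfolding \<rho>_def by simp
  define P where "P t = ym + (t * \<rho>) *\<^sub>R w" for t
  have norm_P: "(norm (P t))\<^sup>2 = (norm ym)\<^sup>2 + t\<^sup>2 * \<rho>\<^sup>2" for t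
  proof -
    have "(norm (P t))\<^sup>2 = (norm ym)\<^sup>2 + (norm ((t * \<rho>) *\<^sub>R w))\<^sup>2"
      unfolding P_def by (rule norm_add_Pythagorean[OF orth])
    also have "(norm ((t * \<rho>) *\<^sub>R w))\<^sup>2 = t\<^sup>2 * \<rho>\<^sup>2"
      by (simp only: norm_scaleR \<open>norm w = 1\<close> mult_1_right power2_abs power_mult_distrib)
    finally show ?thesis .
  qed
  have "0 < r" using \<open>norm ym < r\<close> norm_ge_zero[of ym] by linarith
  have norm_P_le: "norm (P t) \<le> r" if "t \<in> {0..1}" for t
  proof -
    have "t\<^sup>2 \<le> 1" using that by (auto intro: power_le_one)
    then have "t\<^sup>2 * \<rho>\<^sup>2 \<le> \<rho>\<^sup>2" by (intro mult_left_le_one_le) auto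
    then have "(norm (P t))\<^sup>2 \<le> r\<^sup>2" using norm_P[of t] \<rho>2 by linarith
    then show ?thesis by (rule power2_le_imp_le) (use \<open>0 < r\<close> in simp)
  qed
  have P_S: "\<forall>i\<in>S. P t $ i = ym$i" for t
    using wV unfolding P_def kernel_vanishing_on_def by simp
  have A_P: "A *v P t = b" for t
    using ym wV unfolding P_def polydisc_fiber_def kernel_vanishing_on_def
    by (simp add: matrix_vector_right_distrib linear_cmul[OF matrix_vector_mul_linear])
  have fiber_iff: "P t \<in> polydisc_fiber A b c \<longleftrightarrow> P t \<in> {x. \<forall>i\<in>-S. cmod (x$i) < c}"
    if "t \<in> {0..1}" for t
  proof
    assume "P t \<in> polydisc_fiber A b c"
    then show "P t \<in> {x. \<forall>i\<in>-S. cmod (x$i) < c}" using strict norm_P_le[OF that] P_S by blast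
  next
    assume "P t \<in> {x. \<forall>i\<in>-S. cmod (x$i) < c}"
    then have "cmod (P t $ i) \<le> c" for i
      using P_S ym unfolding polydisc_fiber_def by (cases "i \<in> S") (auto simp: less_imp_le)
    then show "P t \<in> polydisc_fiber A b c" using A_P unfolding polydisc_fiber_def by blast
  qed
  have "continuous_on {0..1} P" unfolding P_def by (intro continuous_intros)
  then have "P 1 \<in> polydisc_fiber A b c"
    by (rule connected_clopen_preimage_mem[where a=0, OF connected_Icc _
          compact_imp_closed[OF compact_polydisc_fiber] open_Collect_nth_norm_less fiber_iff])
      (use ym in \<open>auto simp: P_def\<close>)
  moreover have "(norm (P 1))\<^sup>2 = r\<^sup>2" using norm_P[of 1] \<rho>2 by simp
  then have "norm (P 1) = r" by (rule power2_eq_imp_eq) (use \<open>0 < r\<close> in auto)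
  moreover have "ym \<in> adj_range_plus_supp A (insert j S)"
    using adj_range_plus_supp_mono[of S "insert j S" A] ymR by blast
  then have "P 1 \<in> adj_range_plus_supp A (insert j S)" unfolding P_def
    by (intro subspace_add[OF subspace_adj_range_plus_supp]
        subspace_mul[OF subspace_adj_range_plus_supp wR])
  ultimately show ?thesis using that by blast
qed

lemma exists_adj_range_plus_supp_in_polydisc_fiber:
  fixes A :: "complex ^ 'n ^ 'r"
  assumes x0: "x0 \<in> polydisc_fiber A b c" and "r \<le> norm x0" and "norm x0 \<le> R" and "0 < c"
  obtains x T where "x \<in> polydisc_fiber A b c" and "r \<le> norm x" and "norm x \<le> R"
    and "x \<in> adj_range_plus_supp A T" and "real (card T) \<le> R\<^sup>2 / c\<^sup>2 + 1"
proof -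
  let ?Q = "{y \<in> polydisc_fiber A b c. norm y \<le> R}"
  obtain y where yQ: "y \<in> ?Q"
    and y_max: "\<And>y'. y' \<in> ?Q \<Longrightarrow> card (saturated c y') \<le> card (saturated c y)"
    using exists_max_card_saturated[of x0 ?Q c] x0 assms(3) by blast
  define S where "S = saturated c y"
  have "real (card S) * c\<^sup>2 \<le> R\<^sup>2"
    using card_saturated_mult_square_le[of c y] power_mono[of "norm y" R 2] yQ
    unfolding S_def by simp
  then have card_S: "real (card S) \<le> R\<^sup>2 / c\<^sup>2" using \<open>0 < c\<close> by (simp add: pos_le_divide_eq)
  let ?V = "kernel_vanishing_on A S"
  obtain ym where ym: "ym \<in> polydisc_fiber A b c" and "ym - y \<in> ?V"
    and ym_min: "\<And>y'. y' \<in> polydisc_fiber A b c \<Longrightarrow> y' - ym \<in> ?V \<Longrightarrow> norm ym \<le> norm y'"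
    using exists_min_norm_in_polydisc_fiber_coset[OF _ subspace_kernel_vanishing_on] yQ by blast
  then have ym_S: "\<forall>i\<in>S. ym$i = y$i" unfolding kernel_vanishing_on_def by auto
  have "y - ym \<in> ?V" using subspace_neg[OF subspace_kernel_vanishing_on \<open>ym - y \<in> ?V\<close>] by simp
  then have "norm ym \<le> R" using ym_min yQ by fastforce
  have unsaturated: "\<forall>i\<in>-S. cmod (y'$i) < c"
    if "y' \<in> polydisc_fiber A b c" "norm y' \<le> R" "\<forall>i\<in>S. y'$i = ym$i" for y'
    using norm_nth_lt_of_saturated_max[of y' A b c y] y_max that ym_S unfolding S_def by auto
  have ymR: "ym \<in> adj_range_plus_supp A S"
    using min_norm_mem_adj_range_plus_supp[OF ym _ ym_min] unsaturated[OF ym \<open>norm ym \<le> R\<close>]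
    by blast
  consider "r \<le> norm ym" | "?V = {0}" | "norm ym < r" "?V \<noteq> {0}" by fastforce
  then show ?thesis
  proof cases
    case 1
    then show ?thesis using that[OF ym _ \<open>norm ym \<le> R\<close> ymR] card_S by simp
  next
    case 2
    then have "x0 \<in> adj_range_plus_supp A S" by (simp add: adj_range_plus_supp_eq_orthogonal_comp)
    then show ?thesis using that[OF x0 assms(2,3)] card_S by simp
  next
    case 3
    then obtain x j where "x \<in> polydisc_fiber A b c" and "norm x = r"
      and "x \<in> adj_range_plus_supp A (insert j S)"
      using exists_norm_eq_in_polydisc_fiber[OF ym ymR] unsaturated assms(2,3) by (metis order.trans)
    moreover have "real (card (insert j S)) \<le> real (card S) + 1" by (simp add: card_insert_if)
    then have "real (card (insert j S)) \<le> R\<^sup>2 / c\<^sup>2 + 1" using card_S by linarith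
    ultimately show ?thesis using that assms(2,3) by fastforce
  qed
qed

lemma linf_norm_le_iff: "linf_norm x \<le> c \<longleftrightarrow> (\<forall>i. cmod (x$i) \<le> c)"
  unfolding linf_norm_def by (subst Max_le_iff) auto

lemma real_nat_le_inverse_square_plus_one:
  fixes m :: nat and \<nu> \<mu> \<gamma> :: real
  assumes "0 < \<nu>" and "\<nu> \<le> 1" and "0 < \<mu>" and "0 < \<gamma>"
    and m: "real m \<le> (\<nu> + \<gamma>)\<^sup>2 / (\<mu> + \<gamma>)\<^sup>2 + 1"
  shows "real m \<le> 1 / \<mu>\<^sup>2 + 1"
proof (cases "\<mu> \<le> 1")
  case True
  have "\<mu> * (\<nu> + \<gamma>) \<le> \<mu> + \<gamma>"
    using assms True by (simp add: distrib_left mult_left_le mult_left_le_one_le add_mono)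
  then have "(\<nu> + \<gamma>) / (\<mu> + \<gamma>) \<le> 1 / \<mu>"
    using assms by (simp add: divide_simps mult.commute)
  then have "((\<nu> + \<gamma>) / (\<mu> + \<gamma>))\<^sup>2 \<le> (1 / \<mu>)\<^sup>2"
    using assms by (intro power_mono) auto
  then show ?thesis using m by (simp add: power_divide)
next
  case False
  then have "(\<nu> + \<gamma>)\<^sup>2 < (\<mu> + \<gamma>)\<^sup>2" using assms by (intro power_strict_mono) auto
  moreover have "0 < (\<mu> + \<gamma>)\<^sup>2" using assms by simp
  ultimately have "(\<nu> + \<gamma>)\<^sup>2 / (\<mu> + \<gamma>)\<^sup>2 < 1" by (simp add: divide_less_eq)
  then have "real m < 2" using m by linarith
  then have "m \<le> 1" by simp
  then show ?thesis by (simp add: add_increasing)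
qed

theorem lemma6p5:
  fixes A :: "complex ^ 'n ^ 'r" and v :: "complex ^ 'r" and \<nu> \<mu> \<gamma> :: real
  assumes "0 < \<nu>" and "\<nu> \<le> 1" and "0 < \<mu>" and "0 < \<gamma>"
    and "Dset A v \<nu> \<mu> \<gamma> \<noteq> {}"
  shows "\<exists>x \<in> Dset A v \<nu> \<mu> \<gamma>. \<exists>u s. x = u + s \<and> u \<in> range (\<lambda>y. conj_transpose A *v y)
           \<and> real (card {i. s $ i \<noteq> 0}) \<le> 1 / \<mu>\<^sup>2 + 1"
proof -
  obtain x0 where x0: "x0 \<in> Dset A v \<nu> \<mu> \<gamma>" using assms(5) by blast
  then have "x0 \<in> polydisc_fiber A (A *v x0) (\<mu> + \<gamma>)"
    and "\<nu> - \<gamma> \<le> norm x0" and "norm x0 \<le> \<nu> + \<gamma>"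
    unfolding Dset_def polydisc_fiber_def by (auto simp: linf_norm_le_iff)
  moreover have "0 < \<mu> + \<gamma>" using assms(3,4) by simp
  ultimately obtain x T
    where x: "x \<in> polydisc_fiber A (A *v x0) (\<mu> + \<gamma>)" "\<nu> - \<gamma> \<le> norm x" "norm x \<le> \<nu> + \<gamma>"
      and "x \<in> adj_range_plus_supp A T"
      and card_T: "real (card T) \<le> (\<nu> + \<gamma>)\<^sup>2 / (\<mu> + \<gamma>)\<^sup>2 + 1"
    by (rule exists_adj_range_plus_supp_in_polydisc_fiber)
  then obtain l s where "x = conj_transpose A *v l + s" and s: "\<forall>i. i \<notin> T \<longrightarrow> s$i = 0"
    unfolding adj_range_plus_supp_def by blast
  moreover have "x \<in> Dset A v \<nu> \<mu> \<gamma>"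
    using x x0 unfolding Dset_def polydisc_fiber_def by (auto simp: linf_norm_le_iff)
  moreover have "card {i. s$i \<noteq> 0} \<le> card T" using s by (intro card_mono) auto
  then have "real (card {i. s$i \<noteq> 0}) \<le> 1 / \<mu>\<^sup>2 + 1"
    using real_nat_le_inverse_square_plus_one[OF assms(1-4) card_T] by linarith
  ultimately show ?thesis by blast
qed

end
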